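(* Let $n,m\in\mathbb N$ and $\tau_{-n+1},\dots,\tau_{n-1}\in M_m(\mathbb C)$, and let $T\in M_n(M_m(\mathbb C))$ be the block Toeplitz matrix whose $(i,j)$ block is $\tau_{i-j}$ ($0\le i,j\le n-1$). The following are equivalent: (1) $T$ is positive semidefinite; (2) for every function $F:S^1\to M_m(\mathbb C)$ of the form $F(z)=\sum_{k=-n+1}^{n-1}a_kz^k$ with $a_k\in M_m(\mathbb C)$ such that $F(z)$ is positive semidefinite for every $z\in S^1$, the matrix $\sum_{k=-n+1}^{n-1}\tau_{-k}\circ a_k$ is positive semidefinite.
   Context: $S^1$ is the unit circle; $a\circ b$ denotes the Schur–Hadamard (entrywise) product of $m\times m$ matrices. *)

theory Defs
  imports "HOL-Analysis.Analysis"
begin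

text \<open>An m x m complex matrix is represented as a function nat => nat => complex;
  only the entries with indices below m are relevant.\<close>

type_synonym cmat = "nat \<Rightarrow> nat \<Rightarrow> complex"

definition psd :: "nat \<Rightarrow> cmat \<Rightarrow> bool" where
  "psd m A \<longleftrightarrow>
     (\<forall>i<m. \<forall>j<m. A j i = cnj (A i j)) \<and>
     (\<forall>v :: nat \<Rightarrow> complex.
        let q = (\<Sum>i<m. \<Sum>j<m. cnj (v i) * A i j * v j) in Im q = 0 \<and> 0 \<le> Re q)"

text \<open>The block Toeplitz matrix T in M_n(M_m(C)) with (i,j) block tau (i - j),
  identified with an (n*m) x (n*m) complex matrix: row index i*m+p,
  column index j*m+q (0 <= p,q < m).\<close>
definition block_toeplitz :: "nat \<Rightarrow> (int \<Rightarrow> cmat) \<Rightarrow> cmat" where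
  "block_toeplitz m \<tau> = (\<lambda>r c. \<tau> (int (r div m) - int (c div m)) (r mod m) (c mod m))"

definition schur :: "cmat \<Rightarrow> cmat \<Rightarrow> cmat" where
  "schur A B = (\<lambda>i j. A i j * B i j)"

definition idx :: "nat \<Rightarrow> int set" where
  "idx n = {- int n + 1 .. int n - 1}"

definition trig_poly :: "nat \<Rightarrow> (int \<Rightarrow> cmat) \<Rightarrow> complex \<Rightarrow> cmat" where
  "trig_poly n a z = (\<lambda>i j. \<Sum>k\<in>idx n. a k i j * z powi k)"

end

theory Submission
  imports Defs
begin

text \<open>
  (1) implies (2): a positive semidefinite matrix is a Gram matrix, and for a block Toeplitz
  matrix the shift of the Gram vectors by one block preserves inner products on their span.
  Extending this isometry extends T to positive semidefinite block Toeplitz matrices T_N of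
  every size N >= n with the same blocks tau_k, |k| < n. Sampling F at the M-th roots of unity
  shows that the block Toeplitz matrix A_N with (i,j) block a_(j-i) is positive semidefinite.
  The entrywise pairing of two positive semidefinite matrices is nonnegative, and the pairing of
  T_N with A_N equals c + (N - n) S with S = sum_k sum_(p,q) tau_(-k)(p,q) a_k(p,q), so S >= 0.
  Applied to the coefficients conj(v_p) a_k(p,q) v_q this says
  v^* (sum_k tau_(-k) o a_k) v >= 0.

  (2) implies (1): for x = (x_0, ..., x_(n-1)) the coefficients
  a_k(p,q) = sum_(j-i=k) conj(x_i(p)) x_j(q) give F(z)(p,q) = conj(U_p(z)) U_q(z) with
  U(z) = sum_j z^j x_j, which is positive semidefinite, and the sum of all entries of
  sum_k tau_(-k) o a_k is x^* T x.
\<close>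

section \<open>Positive semidefiniteness via quadratic forms\<close>

definition quad_form :: "nat \<Rightarrow> cmat \<Rightarrow> (nat \<Rightarrow> complex) \<Rightarrow> complex" where
  "quad_form L A v = (\<Sum>i<L. \<Sum>j<L. cnj (v i) * A i j * v j)"

lemma psd_iff_quad_form:
  "psd L A \<longleftrightarrow> (\<forall>i<L. \<forall>j<L. A j i = cnj (A i j)) \<and> (\<forall>v. 0 \<le> quad_form L A v)"
  unfolding psd_def quad_form_def Let_def less_eq_complex_def by auto

lemma psd_cong: "(\<And>i j. i < L \<Longrightarrow> j < L \<Longrightarrow> A i j = B i j) \<Longrightarrow> psd L A = psd L B"
  unfolding psd_def by simp

lemma psd_hermitian: "psd L A \<Longrightarrow> i < L \<Longrightarrow> j < L \<Longrightarrow> A j i = cnj (A i j)"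
  unfolding psd_def by blast

lemma quad_form_supported:
  assumes "S \<subseteq> {..<L}" "\<And>t. t \<notin> S \<Longrightarrow> v t = 0"
  shows "quad_form L A v = (\<Sum>i\<in>S. \<Sum>j\<in>S. cnj (v i) * A i j * v j)"
proof -
  have "quad_form L A v = (\<Sum>i\<in>S. \<Sum>j<L. cnj (v i) * A i j * v j)"
    unfolding quad_form_def using assms by (intro sum.mono_neutral_right) auto
  also have "\<dots> = (\<Sum>i\<in>S. \<Sum>j\<in>S. cnj (v i) * A i j * v j)"
    using assms by (intro sum.cong refl sum.mono_neutral_right) auto
  finally show ?thesis .
qed

lemma hermitian_if_quad_form_real:
  assumes real: "\<forall>v. Im (quad_form L A v) = 0" and "i < L" "j < L"
  shows "A j i = cnj (A i j)"
proof -
  have diag: "Im (A k k) = 0" if "k < L" for k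
    using real[rule_format, of "\<lambda>t. if t = k then 1 else 0"] quad_form_supported[of "{k}" L]
    using that by simp
  show ?thesis
  proof (cases "i = j")
    case True
    then show ?thesis using diag[OF \<open>i < L\<close>] by (simp add: complex_eq_iff)
  next
    case False
    have pair: "quad_form L A (\<lambda>t. if t = i then 1 else if t = j then \<beta> else 0) =
        A i i + A i j * \<beta> + cnj \<beta> * A j i + cnj \<beta> * A j j * \<beta>" for \<beta>
    proof -
      have "quad_form L A (\<lambda>t. if t = i then 1 else if t = j then \<beta> else 0) =
          (\<Sum>r\<in>{i, j}. \<Sum>c\<in>{i, j}. cnj (if r = i then 1 else if r = j then \<beta> else 0) * A r c *
            (if c = i then 1 else if c = j then \<beta> else 0))"
        by (rule quad_form_supported) (use assms(2,3) in auto)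
      then show ?thesis using False by (simp add: algebra_simps)
    qed
    have "Im (A i i + A i j + A j i + A j j) = 0"
      using real[rule_format, of "\<lambda>t. if t = i then 1 else if t = j then 1 else 0"]
      unfolding pair by simp
    then have im: "Im (A i j) + Im (A j i) = 0"
      using diag[OF \<open>i < L\<close>] diag[OF \<open>j < L\<close>] by simp
    have "Im (A i i + A i j * \<i> + cnj \<i> * A j i + cnj \<i> * A j j * \<i>) = 0"
      using real[rule_format, of "\<lambda>t. if t = i then 1 else if t = j then \<i> else 0"]
      unfolding pair .
    then have re: "Re (A i j) - Re (A j i) = 0"
      using diag[OF \<open>i < L\<close>] diag[OF \<open>j < L\<close>] by simp
    show ?thesis using im re by (simp add: complex_eq_iff)
  qed
qed

lemma psd_iff_quad_form_nonneg: "psd L A \<longleftrightarrow> (\<forall>v. 0 \<le> quad_form L A v)"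
proof
  assume nonneg: "\<forall>v. 0 \<le> quad_form L A v"
  then have "\<forall>v. Im (quad_form L A v) = 0" by (simp add: less_eq_complex_def)
  then show "psd L A"
    unfolding psd_iff_quad_form using nonneg hermitian_if_quad_form_real by blast
qed (simp add: psd_iff_quad_form)

lemma psd_diag_nonneg:
  assumes "psd L A" "i < L"
  shows "0 \<le> A i i"
proof -
  have "quad_form L A (\<lambda>t. if t = i then 1 else 0) = A i i"
    using quad_form_supported[of "{i}" L] assms(2) by simp
  then show ?thesis using assms(1) unfolding psd_iff_quad_form_nonneg by metis
qed

lemma psd_congruence:
  assumes "psd m A"
  shows "psd m (\<lambda>p q. cnj (v p) * A p q * v q)"
proof -
  have "quad_form m (\<lambda>p q. cnj (v p) * A p q * v q) w = quad_form m A (\<lambda>p. v p * w p)" for w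
    unfolding quad_form_def by (simp add: mult_ac)
  then show ?thesis using assms unfolding psd_iff_quad_form_nonneg by simp
qed

section \<open>Gram matrices\<close>

definition cinner :: "nat \<Rightarrow> (nat \<Rightarrow> complex) \<Rightarrow> (nat \<Rightarrow> complex) \<Rightarrow> complex" where
  "cinner D x y = (\<Sum>t<D. x t * cnj (y t))"

definition lincomb :: "nat \<Rightarrow> (nat \<Rightarrow> complex) \<Rightarrow> (nat \<Rightarrow> nat \<Rightarrow> complex) \<Rightarrow> nat \<Rightarrow> complex" where
  "lincomb K c X = (\<lambda>t. \<Sum>k<K. c k * X k t)"

lemma cinner_commute: "cinner D y x = cnj (cinner D x y)"
  unfolding cinner_def by (simp add: mult.commute)

lemma cinner_self_nonneg: "0 \<le> cinner D x x"
  unfolding cinner_def by (intro sum_nonneg) (simp add: complex_mult_cnj less_eq_complex_def)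

lemma cinner_self_eq_0D:
  assumes "cinner D x x = 0" "t < D"
  shows "x t = 0"
proof -
  have "\<forall>s\<in>{..<D}. x s * cnj (x s) = 0"
    using assms(1) unfolding cinner_def
    by (subst sum_nonneg_eq_0_iff[symmetric]) (auto simp: complex_mult_cnj less_eq_complex_def)
  then show ?thesis using assms(2) by simp
qed

lemma cinner_eq_0_if_self_eq_0:
  assumes "cinner D x x = 0"
  shows "cinner D y x = 0"
  unfolding cinner_def by (rule sum.neutral) (simp add: cinner_self_eq_0D[OF assms])

lemma cinner_add_left: "cinner D (\<lambda>t. x t + y t) z = cinner D x z + cinner D y z"
  unfolding cinner_def by (simp add: distrib_right sum.distrib)

lemma cinner_add_right: "cinner D z (\<lambda>t. x t + y t) = cinner D z x + cinner D z y"
  unfolding cinner_def by (simp add: distrib_left sum.distrib)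

lemma cinner_diff_left: "cinner D (\<lambda>t. x t - y t) z = cinner D x z - cinner D y z"
  unfolding cinner_def by (simp add: left_diff_distrib sum_subtractf)

lemma cinner_scale_left: "cinner D (\<lambda>t. c * x t) y = c * cinner D x y"
  unfolding cinner_def by (simp add: sum_distrib_left mult.assoc)

lemma cinner_add_orthogonal:
  assumes "cinner D e y' = 0" "cinner D e' y = 0"
  shows "cinner D (\<lambda>t. y t + e t) (\<lambda>t. y' t + e' t) = cinner D y y' + cinner D e e'"
proof -
  have "cinner D y e' = 0" using assms(2) by (subst cinner_commute) simp
  then show ?thesis using assms(1) by (simp add: cinner_add_left cinner_add_right)
qed

lemma cinner_lincomb_left: "cinner D (lincomb K c X) y = (\<Sum>k<K. c k * cinner D (X k) y)"
  unfolding cinner_def lincomb_def by (simp add: sum_distrib_left sum_distrib_right mult_ac) (rule sum.swap)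

lemma cinner_lincomb_right: "cinner D y (lincomb K c X) = (\<Sum>k<K. cnj (c k) * cinner D y (X k))"
  using cinner_lincomb_left[of D K c X y] by (subst (1 2) cinner_commute) (simp add: cnj_sum)

lemma cinner_lincomb_cong:
  assumes "\<forall>k<K. \<forall>k'<K. cinner D (X k) (X k') = cinner D' (X' k) (X' k')"
  shows "cinner D (lincomb K c X) (lincomb K c' X) = cinner D' (lincomb K c X') (lincomb K c' X')"
  using assms by (simp add: cinner_lincomb_left cinner_lincomb_right)

lemma gram_matrix_psd:
  assumes "\<forall>r<L. \<forall>c<L. A r c = cinner D (X c) (X r)"
  shows "psd L A"
  unfolding psd_iff_quad_form_nonneg
proof
  fix v
  have "quad_form L A v = cinner D (lincomb L v X) (lincomb L v X)"
    unfolding quad_form_def cinner_lincomb_left cinner_lincomb_right sum_distrib_left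
    using assms by (simp add: mult_ac)
  then show "0 \<le> quad_form L A v" by (simp add: cinner_self_nonneg)
qed

lemma psd_rank_one: "psd m (\<lambda>p q. cnj (u p) * u q)"
  by (rule gram_matrix_psd[where D = 1 and X = "\<lambda>c t. u c"]) (simp add: cinner_def mult.commute)

lemma quad_form_Suc:
  "quad_form (Suc N) A w = quad_form N A w + (\<Sum>i<N. cnj (w i) * A i N) * w N
     + cnj (w N) * (\<Sum>j<N. A N j * w j) + cnj (w N) * A N N * w N"
  unfolding quad_form_def by (simp add: sum.distrib sum_distrib_left sum_distrib_right mult.assoc)

lemma psd_column_eq_0_if_diag_eq_0:
  assumes psd: "psd L A" and "i < L" "k < L" and zero: "A k k = 0"
  shows "A i k = 0"
proof (rule ccontr)
  assume nz: "A i k \<noteq> 0"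
  then have "i \<noteq> k" using zero by auto
  define r :: real where "r = (Re (A i i) + 1) / (2 * (cmod (A i k))\<^sup>2)"
  define \<beta> where "\<beta> = - of_real r * cnj (A i k)"
  have herm: "A k i = cnj (A i k)" using psd_hermitian[OF psd assms(2,3)] .
  have "quad_form L A (\<lambda>t. if t = i then 1 else if t = k then \<beta> else 0) =
      (\<Sum>r\<in>{i, k}. \<Sum>c\<in>{i, k}. cnj (if r = i then 1 else if r = k then \<beta> else 0) * A r c *
        (if c = i then 1 else if c = k then \<beta> else 0))"
    by (rule quad_form_supported) (use assms(2,3) in auto)
  also have "\<dots> = A i i - 2 * of_real r * (A i k * cnj (A i k))"
    using \<open>i \<noteq> k\<close> zero herm unfolding \<beta>_def by (simp add: algebra_simps)
  also have "\<dots> = A i i - of_real (2 * r * (cmod (A i k))\<^sup>2)"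
    by (simp flip: complex_norm_square)
  finally have "0 \<le> A i i - of_real (2 * r * (cmod (A i k))\<^sup>2)"
    using psd unfolding psd_iff_quad_form_nonneg by metis
  then have "0 \<le> Re (A i i) - 2 * r * (cmod (A i k))\<^sup>2"
    by (simp add: less_eq_complex_def)
  moreover have "0 < (cmod (A i k))\<^sup>2" using nz by simp
  ultimately show False unfolding r_def by (simp add: field_simps)
qed

lemma psd_schur_complement:
  assumes psd: "psd (Suc N) A"
  shows "psd N (\<lambda>i j. A i j - A i N * A N j / A N N)"
  unfolding psd_iff_quad_form_nonneg
proof
  fix v
  define a where "a = A N N"
  define c where "c = (\<Sum>j<N. A N j * v j)"
  \<comment> \<open>If \<open>a = 0\<close>, division by zero gives \<open>s = 0\<close> and the complement is \<open>A\<close> itself.\<close>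
  define s where "s = - c / a"
  define w where "w = (\<lambda>t. if t < N then v t else s)"
  have a_real: "cnj a = a"
    using psd_diag_nonneg[OF psd, of N] unfolding a_def by (simp add: less_eq_complex_def complex_eq_iff)
  have col: "(\<Sum>i<N. cnj (v i) * A i N) = cnj c"
  proof -
    have "A i N = cnj (A N i)" if "i < N" for i
      using psd_hermitian[OF psd, of i N] that by simp
    then show ?thesis unfolding c_def cnj_sum by (intro sum.cong) (simp_all add: mult.commute)
  qed
  have "quad_form N (\<lambda>i j. A i j - A i N * A N j / a) v =
      quad_form N A v - (\<Sum>i<N. \<Sum>j<N. (cnj (v i) * A i N) * (A N j * v j)) / a"
    unfolding quad_form_def by (simp add: algebra_simps sum_subtractf sum_divide_distrib)
  also have "\<dots> = quad_form N A v - cnj c * c / a"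
    unfolding sum_product[symmetric] col c_def ..
  also have "\<dots> = quad_form N A v + cnj c * s + cnj s * c + cnj s * a * s"
  proof (cases "a = 0")
    case False
    then show ?thesis unfolding s_def using a_real by (simp add: field_simps)
  qed (simp add: s_def)
  also have "\<dots> = quad_form (Suc N) A w"
  proof -
    have "quad_form N A w = quad_form N A v"
      unfolding quad_form_def w_def by (intro sum.cong) simp_all
    moreover have "(\<Sum>i<N. cnj (w i) * A i N) = cnj c"
      unfolding col[symmetric] w_def by (intro sum.cong) simp_all
    moreover have "(\<Sum>j<N. A N j * w j) = c"
      unfolding c_def w_def by (intro sum.cong) simp_all
    moreover have "w N = s"
      unfolding w_def by simp
    ultimately show ?thesis unfolding quad_form_Suc a_def by simp
  qed
  finally show "0 \<le> quad_form N (\<lambda>i j. A i j - A i N * A N j / A N N) v"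
    using psd unfolding psd_iff_quad_form_nonneg a_def by simp
qed

lemma psd_imp_gram_matrix: "psd N A \<Longrightarrow> \<exists>X. \<forall>i<N. \<forall>j<N. A i j = cinner N (X j) (X i)"
proof (induction N arbitrary: A)
  case 0
  then show ?case by simp
next
  case (Suc N)
  define a where "a = A N N"
  define B where "B = (\<lambda>i j. A i j - A i N * A N j / a)"
  obtain Y where Y: "\<forall>i<N. \<forall>j<N. B i j = cinner N (Y j) (Y i)"
    using Suc.IH psd_schur_complement[OF Suc.prems] unfolding B_def a_def by blast
  have "0 \<le> a" using psd_diag_nonneg[OF Suc.prems] unfolding a_def by simp
  define \<sigma> where "\<sigma> = complex_of_real (sqrt (Re a))"
  have \<sigma>: "\<sigma> * \<sigma> = a" "cnj \<sigma> = \<sigma>"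
    using \<open>0 \<le> a\<close> unfolding \<sigma>_def
    by (simp_all add: less_eq_complex_def complex_eq_iff flip: of_real_mult)
  have herm: "A N j = cnj (A j N)" if "j < Suc N" for j
    using psd_hermitian[OF Suc.prems that, of N] by simp
  have border: "A i j = A i N * A N j / a" if "i = N \<or> j = N" "i < Suc N" "j < Suc N" for i j
  proof (cases "a = 0")
    case True
    have "A i N = 0" "A N j = 0"
      using psd_column_eq_0_if_diag_eq_0[OF Suc.prems, of _ N] True that herm[of j] unfolding a_def by auto
    then show ?thesis using that by auto
  next
    case False
    then show ?thesis using that unfolding a_def by auto
  qed
  \<comment> \<open>One Cholesky step: coordinate \<open>N\<close> carries the rank-one part \<open>A i N * A N j / a\<close>.\<close>
  define X where "X = (\<lambda>i t. if t = N then cnj (A i N) / \<sigma> else if i < N then Y i t else 0)"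
  have "A i j = cinner (Suc N) (X j) (X i)" if "i < Suc N" "j < Suc N" for i j
  proof -
    have "cinner N (X j) (X i) = (if i < N \<and> j < N then B i j else 0)"
      using Y unfolding cinner_def X_def by (auto intro!: sum.neutral)
    moreover have "X j N * cnj (X i N) = A i N * A N j / a"
      unfolding X_def herm[OF that(2)] by (simp add: \<sigma> flip: \<sigma>(1))
    ultimately have "cinner (Suc N) (X j) (X i) = (if i < N \<and> j < N then B i j else 0) + A i N * A N j / a"
      unfolding cinner_def by simp
    then show ?thesis using border[OF _ that] that unfolding B_def by (auto simp: less_Suc_eq)
  qed
  then show ?case by blast
qed

lemma psd_pairing_nonneg:
  assumes "psd L A" "psd L B"
  shows "0 \<le> (\<Sum>r<L. \<Sum>c<L. A r c * B r c)"
proof -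
  obtain X where X: "\<forall>r<L. \<forall>c<L. A r c = cinner L (X c) (X r)"
    using psd_imp_gram_matrix[OF assms(1)] by blast
  have "(\<Sum>r<L. \<Sum>c<L. A r c * B r c) = (\<Sum>r<L. \<Sum>c<L. \<Sum>t<L. cnj (X r t) * B r c * X c t)"
    using X unfolding cinner_def by (simp add: sum_distrib_left mult_ac)
  also have "\<dots> = (\<Sum>r<L. \<Sum>t<L. \<Sum>c<L. cnj (X r t) * B r c * X c t)"
    by (rule sum.cong[OF refl], rule sum.swap)
  also have "\<dots> = (\<Sum>t<L. quad_form L B (\<lambda>r. X r t))"
    unfolding quad_form_def by (rule sum.swap)
  finally show ?thesis
    using assms(2) unfolding psd_iff_quad_form_nonneg by (simp add: sum_nonneg)
qed

section \<open>Extending shift-invariant positive semidefinite matrices\<close>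

lemma lincomb_Suc: "lincomb (Suc K) c X t = lincomb K c X t + c K * X K t"
  unfolding lincomb_def by simp

lemma orthogonal_projection_exists:
  "\<exists>c. \<forall>j<K. cinner D (\<lambda>t. x t - lincomb K c w t) (w j) = 0"
proof (induction K arbitrary: x)
  case 0
  then show ?case by simp
next
  case (Suc K)
  obtain c where c: "\<forall>j<K. cinner D (\<lambda>t. x t - lincomb K c w t) (w j) = 0"
    using Suc.IH by blast
  obtain d where d: "\<forall>j<K. cinner D (\<lambda>t. w K t - lincomb K d w t) (w j) = 0"
    using Suc.IH by blast
  define e where "e = (\<lambda>t. x t - lincomb K c w t)"
  define w' where "w' = (\<lambda>t. w K t - lincomb K d w t)"
  \<comment> \<open>If \<open>w'\<close> vanishes, \<open>\<alpha> = 0\<close> by division by zero, and the residual is orthogonal to \<open>w'\<close> anyway.\<close>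
  define \<alpha> where "\<alpha> = cinner D e w' / cinner D w' w'"
  define c' where "c' = (\<lambda>k. if k < K then c k - \<alpha> * d k else \<alpha>)"
  have residual: "(\<lambda>t. x t - lincomb (Suc K) c' w t) = (\<lambda>t. e t - \<alpha> * w' t)"
  proof
    fix t
    have "lincomb K c' w t = lincomb K c w t - \<alpha> * lincomb K d w t"
      unfolding lincomb_def c'_def by (simp add: algebra_simps sum_subtractf sum_distrib_left)
    then show "x t - lincomb (Suc K) c' w t = e t - \<alpha> * w' t"
      unfolding lincomb_Suc e_def w'_def by (simp add: c'_def algebra_simps)
  qed
  have orth_w: "cinner D (\<lambda>t. e t - \<alpha> * w' t) (w j) = 0" if "j < K" for j
    using c d that unfolding cinner_diff_left cinner_scale_left e_def w'_def by simp
  have orth_w': "cinner D (\<lambda>t. e t - \<alpha> * w' t) w' = 0"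
  proof (cases "cinner D w' w' = 0")
    case True
    then show ?thesis
      unfolding cinner_diff_left cinner_scale_left by (simp add: cinner_eq_0_if_self_eq_0)
  next
    case False
    then show ?thesis unfolding cinner_diff_left cinner_scale_left \<alpha>_def by simp
  qed
  have "cinner D (\<lambda>t. e t - \<alpha> * w' t) (w K) = 0"
  proof -
    have "w K = (\<lambda>t. w' t + lincomb K d w t)" unfolding w'_def by simp
    then show ?thesis
      using orth_w orth_w' by (simp add: cinner_add_right cinner_lincomb_right)
  qed
  then have "\<forall>j<Suc K. cinner D (\<lambda>t. x t - lincomb (Suc K) c' w t) (w j) = 0"
    unfolding residual using orth_w by (auto simp: less_Suc_eq)
  then show ?case by blast
qed

definition join :: "nat \<Rightarrow> (nat \<Rightarrow> complex) \<Rightarrow> (nat \<Rightarrow> complex) \<Rightarrow> nat \<Rightarrow> complex" where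
  "join D x y = (\<lambda>t. if t < D then x t else y (t - D))"

lemma cinner_join:
  "cinner (D + D') (join D x y) (join D x' y') = cinner D x x' + cinner D' y y'"
proof -
  let ?f = "\<lambda>t. join D x y t * cnj (join D x' y' t)"
  have "cinner (D + D') (join D x y) (join D x' y') = sum ?f {0..<D} + sum ?f {D..<D + D'}"
    unfolding cinner_def lessThan_atLeast0 by (rule sum.atLeastLessThan_concat[symmetric]) simp_all
  also have "sum ?f {D..<D + D'} = sum ?f {0 + D..<D' + D}"
    by (simp add: add.commute)
  also have "sum ?f {0..<D} + sum ?f {0 + D..<D' + D} = cinner D x x' + cinner D' y y'"
    unfolding sum.shift_bounds_nat_ivl cinner_def lessThan_atLeast0 join_def by simp
  finally show ?thesis .
qed

lemma lincomb_unit: "r < K \<Longrightarrow> lincomb K (\<lambda>k. if k = r then 1 else 0) X = X r"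
  unfolding lincomb_def by (simp add: if_distrib[of "\<lambda>a. a * _"] cong: if_cong)

lemma projection_coefficients_exist:
  "\<exists>\<beta>. (\<forall>r<K. \<beta> r = (\<lambda>k. if k = r then 1 else 0)) \<and>
      (\<forall>r j. j < K \<longrightarrow> cinner D (\<lambda>t. X r t - lincomb K (\<beta> r) X t) (X j) = 0)"
proof -
  have "\<forall>r. \<exists>c. \<forall>j<K. cinner D (\<lambda>t. X r t - lincomb K c X t) (X j) = 0"
    using orthogonal_projection_exists by blast
  then obtain cc where cc: "\<And>r j. j < K \<Longrightarrow> cinner D (\<lambda>t. X r t - lincomb K (cc r) X t) (X j) = 0"
    by metis
  define \<beta> where "\<beta> = (\<lambda>r. if r < K then (\<lambda>k. if k = r then 1 else 0) else cc r)"
  have "cinner D (\<lambda>t. X r t - lincomb K (\<beta> r) X t) (X j) = 0" if "j < K" for r j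
  proof (cases "r < K")
    case True
    then show ?thesis by (simp add: \<beta>_def lincomb_unit cinner_def)
  next
    case False
    then show ?thesis using cc[OF that] unfolding \<beta>_def by simp
  qed
  moreover have "\<forall>r<K. \<beta> r = (\<lambda>k. if k = r then 1 else 0)"
    unfolding \<beta>_def by simp
  ultimately show ?thesis by blast
qed

lemma gram_shift_extension:
  fixes X :: "nat \<Rightarrow> nat \<Rightarrow> complex"
  assumes shift: "\<forall>r<K. \<forall>c<K. cinner D (X (c + m)) (X (r + m)) = cinner D (X c) (X r)"
  shows "\<exists>Z. \<forall>r<K + m. \<forall>c<K + m. cinner (D + D) (Z c) (Z r) = cinner D (X c) (X r) \<and>
           cinner (D + D) (Z (c + m)) (Z (r + m)) = cinner D (X c) (X r)"
proof -
  obtain \<beta> where \<beta>_low: "\<forall>r<K. \<beta> r = (\<lambda>k. if k = r then 1 else 0)"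
    and \<beta>_orth: "\<forall>r j. j < K \<longrightarrow> cinner D (\<lambda>t. X r t - lincomb K (\<beta> r) X t) (X j) = 0"
    using projection_coefficients_exist by blast
  \<comment> \<open>\<open>Y r\<close> is the orthogonal projection of \<open>X r\<close> onto the span of the first \<open>K\<close> vectors
    and \<open>W r\<close> its image under the shift \<open>X k \<mapsto> X (k + m)\<close>, an isometry on that span;
    the residual \<open>E r\<close> is placed in \<open>D\<close> fresh coordinates.\<close>
  define Y where "Y = (\<lambda>r. lincomb K (\<beta> r) X)"
  define W where "W = (\<lambda>r. lincomb K (\<beta> r) (\<lambda>k. X (k + m)))"
  define E where "E = (\<lambda>r t. X r t - Y r t)"
  have Y_low: "Y r = X r" and W_low: "W r = X (r + m)" if "r < K" for r
    using that \<beta>_low unfolding Y_def W_def by (simp_all add: lincomb_unit)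
  have E_orth: "cinner D (E r) (X j) = 0" if "j < K" for r j
    using \<beta>_orth that unfolding E_def Y_def by blast
  have X_split: "cinner D (X c) (X r) = cinner D (Y c) (Y r) + cinner D (E c) (E r)" for r c
  proof -
    have E_Y: "cinner D (E c) (Y r) = 0" for r c
      unfolding Y_def cinner_lincomb_right using E_orth by simp
    have "cinner D (X c) (X r) = cinner D (\<lambda>t. Y c t + E c t) (\<lambda>t. Y r t + E r t)"
      unfolding E_def by simp
    then show ?thesis using cinner_add_orthogonal E_Y by simp
  qed
  have W_Y: "cinner D (W c) (W r) = cinner D (Y c) (Y r)" for r c
    unfolding W_def Y_def using shift by (intro cinner_lincomb_cong) simp
  define Z where "Z = (\<lambda>s. if s < m then join D (X s) (\<lambda>_. 0) else join D (W (s - m)) (E (s - m)))"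
  have Z_low: "Z s = join D (X s) (\<lambda>_. 0)" if "s < K + m" for s
  proof (cases "s < m")
    case False
    then have "s - m < K" using that by simp
    then have "W (s - m) = X s" "E (s - m) = (\<lambda>_. 0)"
      using False W_low Y_low unfolding E_def by simp_all
    then show ?thesis using False unfolding Z_def by simp
  qed (simp add: Z_def)
  have Z_high: "Z (s + m) = join D (W s) (E s)" for s
    unfolding Z_def by simp
  have "cinner (D + D) (Z c) (Z r) = cinner D (X c) (X r) \<and>
      cinner (D + D) (Z (c + m)) (Z (r + m)) = cinner D (X c) (X r)" if "r < K + m" "c < K + m" for r c
    unfolding Z_low[OF that(1)] Z_low[OF that(2)] Z_high cinner_join W_Y X_split
    by (simp add: cinner_def)
  then show ?thesis by blast
qed

lemma psd_shift_invariant_extension: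
  assumes psd: "psd L G" and "m \<le> L"
    and shift: "\<forall>r c. r + m < L \<longrightarrow> c + m < L \<longrightarrow> G (r + m) (c + m) = G r c"
  shows "\<exists>G'. psd (L + m) G' \<and> (\<forall>r<L. \<forall>c<L. G' r c = G r c \<and> G' (r + m) (c + m) = G r c)"
proof -
  define K where "K = L - m"
  have L: "L = K + m" using \<open>m \<le> L\<close> unfolding K_def by simp
  obtain X where X: "\<forall>r<L. \<forall>c<L. G r c = cinner L (X c) (X r)"
    using psd_imp_gram_matrix[OF psd] by blast
  have "cinner L (X (c + m)) (X (r + m)) = cinner L (X c) (X r)" if "r < K" "c < K" for r c
  proof -
    have "r + m < L" "c + m < L" "r < L" "c < L" using that unfolding L by simp_all
    have "cinner L (X (c + m)) (X (r + m)) = G (r + m) (c + m)"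
      using X \<open>r + m < L\<close> \<open>c + m < L\<close> by simp
    also have "\<dots> = G r c"
      using shift \<open>r + m < L\<close> \<open>c + m < L\<close> by simp
    also have "\<dots> = cinner L (X c) (X r)"
      using X \<open>r < L\<close> \<open>c < L\<close> by simp
    finally show ?thesis .
  qed
  then have "\<exists>Z. \<forall>r<L. \<forall>c<L. cinner (L + L) (Z c) (Z r) = cinner L (X c) (X r) \<and>
      cinner (L + L) (Z (c + m)) (Z (r + m)) = cinner L (X c) (X r)"
    unfolding L by (intro gram_shift_extension) simp
  then obtain Z where Z: "\<forall>r<L. \<forall>c<L. cinner (L + L) (Z c) (Z r) = cinner L (X c) (X r) \<and>
      cinner (L + L) (Z (c + m)) (Z (r + m)) = cinner L (X c) (X r)"
    by blast
  define G' where "G' = (\<lambda>r c. cinner (L + L) (Z c) (Z r))"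
  have "psd (L + m) G'"
    unfolding G'_def by (rule gram_matrix_psd[where D = "L + L" and X = Z]) simp
  moreover have "\<forall>r<L. \<forall>c<L. G' r c = G r c \<and> G' (r + m) (c + m) = G r c"
    using X Z unfolding G'_def by simp
  ultimately show ?thesis by blast
qed

section \<open>Block Toeplitz matrices\<close>

lemma sum_blocks:
  fixes f :: "nat \<Rightarrow> 'a :: comm_monoid_add"
  shows "(\<Sum>r<N * m. f r) = (\<Sum>i<N. \<Sum>p<m. f (i * m + p))"
proof -
  have "sum f {i * m..<i * m + m} = (\<Sum>p<m. f (i * m + p))" for i
    using sum.shift_bounds_nat_ivl[of f 0 "i * m" m] by (simp add: lessThan_atLeast0 add.commute)
  then show ?thesis using sum.nat_group[of f m N] by simp
qed

lemma sum_nested_swap: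
  "(\<Sum>p\<in>P. \<Sum>q\<in>Q. \<Sum>i\<in>I. \<Sum>j\<in>J. f p q i j) = (\<Sum>i\<in>I. \<Sum>j\<in>J. \<Sum>p\<in>P. \<Sum>q\<in>Q. f p q i j)"
proof -
  have "(\<Sum>p\<in>P. \<Sum>q\<in>Q. \<Sum>i\<in>I. \<Sum>j\<in>J. f p q i j) = (\<Sum>p\<in>P. \<Sum>i\<in>I. \<Sum>j\<in>J. \<Sum>q\<in>Q. f p q i j)"
    by (intro sum.cong refl) (simp add: sum.swap[of _ Q])
  also have "\<dots> = (\<Sum>i\<in>I. \<Sum>j\<in>J. \<Sum>p\<in>P. \<Sum>q\<in>Q. f p q i j)"
    by (simp add: sum.swap[of _ P])
  finally show ?thesis .
qed

lemma quad_form_blocks: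
  "quad_form (N * m) A x =
     (\<Sum>i<N. \<Sum>j<N. \<Sum>p<m. \<Sum>q<m. cnj (x (i * m + p)) * A (i * m + p) (j * m + q) * x (j * m + q))"
  unfolding quad_form_def sum_blocks by (rule sum.cong[OF refl], rule sum.swap)

lemma block_toeplitz_entry:
  "p < m \<Longrightarrow> q < m \<Longrightarrow> block_toeplitz m \<tau> (i * m + p) (j * m + q) = \<tau> (int i - int j) p q"
  unfolding block_toeplitz_def by simp

lemma block_toeplitz_shift:
  "0 < m \<Longrightarrow> block_toeplitz m \<tau> (r + m) (c + m) = block_toeplitz m \<tau> r c"
  unfolding block_toeplitz_def by simp

lemma block_index_split:
  assumes "0 < m" "r < Suc N * m"
  obtains i p where "r = i * m + p" "p < m" "i \<le> N"
proof
  show "r = r div m * m + r mod m" by simp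
  show "r mod m < m" using assms(1) by simp
  show "r div m \<le> N" using assms div_less_iff_less_mult[of m r "Suc N"] by simp
qed

lemma block_index_less:
  fixes i N p m :: nat
  assumes "i < N" "p < m"
  shows "i * m + p < N * m"
proof -
  have "Suc i * m \<le> N * m" using assms(1) by (intro mult_le_mono1) simp
  then show ?thesis using assms(2) by simp
qed

definition corner_extension :: "nat \<Rightarrow> nat \<Rightarrow> cmat \<Rightarrow> (int \<Rightarrow> cmat) \<Rightarrow> int \<Rightarrow> cmat" where
  "corner_extension m N G \<tau> = (\<lambda>k. if k = int N then (\<lambda>p q. G (N * m + p) q)
     else if k = - int N then (\<lambda>p q. G p (N * m + q)) else \<tau> k)"

lemma corner_extension_eq: "\<bar>k\<bar> < int N \<Longrightarrow> corner_extension m N G \<tau> k = \<tau> k"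
  unfolding corner_extension_def by auto

lemma block_toeplitz_corner_extension:
  assumes "0 < m" "0 < N"
    and G: "\<forall>r<N * m. \<forall>c<N * m. G r c = block_toeplitz m \<tau> r c \<and>
        G (r + m) (c + m) = block_toeplitz m \<tau> r c"
    and r_lt: "r < Suc N * m" and c_lt: "c < Suc N * m"
  shows "block_toeplitz m (corner_extension m N G \<tau>) r c = G r c"
proof -
  obtain i p where r: "r = i * m + p" "p < m" "i \<le> N" using block_index_split[OF \<open>0 < m\<close> r_lt] .
  obtain j q where c: "c = j * m + q" "q < m" "j \<le> N" using block_index_split[OF \<open>0 < m\<close> c_lt] .
  have entry: "block_toeplitz m (corner_extension m N G \<tau>) r c = corner_extension m N G \<tau> (int i - int j) p q"
    unfolding r c by (rule block_toeplitz_entry[OF r(2) c(2)])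
  consider "i < N" "j < N" | "0 < i" "0 < j" | "i = N" "j = 0" | "i = 0" "j = N"
    using r(3) c(3) by linarith
  then show ?thesis
  proof cases
    case 1
    then have "G r c = block_toeplitz m \<tau> r c"
      using G block_index_less[OF \<open>i < N\<close> r(2)] block_index_less[OF \<open>j < N\<close> c(2)]
      unfolding r c by blast
    then show ?thesis
      using 1 unfolding entry r c block_toeplitz_entry[OF r(2) c(2)] by (simp add: corner_extension_eq)
  next
    case 2
    have "i - 1 < N" "j - 1 < N" using 2 r(3) c(3) by simp_all
    have "r = (i - 1) * m + p + m" "c = (j - 1) * m + q + m"
      using 2 unfolding r c by (simp_all add: algebra_simps, cases i, simp_all, cases j, simp_all)
    then have "G r c = block_toeplitz m \<tau> ((i - 1) * m + p) ((j - 1) * m + q)"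
      using G block_index_less[OF \<open>i - 1 < N\<close> r(2)] block_index_less[OF \<open>j - 1 < N\<close> c(2)]
      by simp
    also have "\<dots> = \<tau> (int i - int j) p q"
      using 2 by (simp add: block_toeplitz_entry[OF r(2) c(2)] of_nat_diff)
    finally show ?thesis
      unfolding entry using 2 r(3) c(3) by (simp add: corner_extension_eq)
  next
    case 3
    then have "corner_extension m N G \<tau> (int i - int j) p q = G r c"
      unfolding corner_extension_def r c by simp
    then show ?thesis using entry by simp
  next
    case 4
    then have "corner_extension m N G \<tau> (int i - int j) p q = G r c"
      using \<open>0 < N\<close> unfolding corner_extension_def r c by simp
    then show ?thesis using entry by simp
  qed
qed

lemma block_toeplitz_extension:
  assumes psd: "psd (N * m) (block_toeplitz m \<tau>)" and "0 < N"
  shows "\<exists>\<tau>'. (\<forall>k. \<bar>k\<bar> < int N \<longrightarrow> \<tau>' k = \<tau> k) \<and> psd (Suc N * m) (block_toeplitz m \<tau>')"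
proof (cases "m = 0")
  case True
  then show ?thesis unfolding psd_def by auto
next
  case False
  have "m \<le> N * m" using \<open>0 < N\<close> by simp
  then obtain G where psd_G: "psd (N * m + m) G"
    and G: "\<forall>r<N * m. \<forall>c<N * m. G r c = block_toeplitz m \<tau> r c \<and>
        G (r + m) (c + m) = block_toeplitz m \<tau> r c"
    using psd_shift_invariant_extension[OF psd] block_toeplitz_shift False by blast
  have "psd (Suc N * m) (block_toeplitz m (corner_extension m N G \<tau>))"
    using psd_G psd_cong[of "Suc N * m" _ G] block_toeplitz_corner_extension[OF _ \<open>0 < N\<close> G] False
    by (simp add: add.commute)
  then show ?thesis using corner_extension_eq by blast
qed

lemma block_toeplitz_extension_to:
  assumes psd: "psd (n * m) (block_toeplitz m \<tau>)" and "0 < n" "n \<le> N"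
  shows "\<exists>\<tau>'. (\<forall>k. \<bar>k\<bar> < int n \<longrightarrow> \<tau>' k = \<tau> k) \<and> psd (N * m) (block_toeplitz m \<tau>')"
  using \<open>n \<le> N\<close>
proof (induction N rule: dec_induct)
  case base
  then show ?case using psd by blast
next
  case (step N)
  then obtain \<tau>' where agree: "\<forall>k. \<bar>k\<bar> < int n \<longrightarrow> \<tau>' k = \<tau> k"
    and psd': "psd (N * m) (block_toeplitz m \<tau>')" by blast
  have "0 < N" using \<open>0 < n\<close> \<open>n \<le> N\<close> by simp
  then obtain \<tau>'' where agree': "\<forall>k. \<bar>k\<bar> < int N \<longrightarrow> \<tau>'' k = \<tau>' k"
    and psd'': "psd (Suc N * m) (block_toeplitz m \<tau>'')"
    using block_toeplitz_extension[OF psd'] by blast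
  have "\<tau>'' k = \<tau> k" if "\<bar>k\<bar> < int n" for k
    using agree agree' that \<open>n \<le> N\<close> by simp
  then show ?case using psd'' by blast
qed

definition diagonal_pairing :: "nat \<Rightarrow> (int \<Rightarrow> cmat) \<Rightarrow> (int \<Rightarrow> cmat) \<Rightarrow> int \<Rightarrow> complex" where
  "diagonal_pairing m \<tau> \<sigma> d = (\<Sum>p<m. \<Sum>q<m. \<tau> d p q * \<sigma> d p q)"

lemma block_toeplitz_pairing:
  "(\<Sum>r<N * m. \<Sum>c<N * m. block_toeplitz m \<tau> r c * block_toeplitz m \<sigma> r c) =
     (\<Sum>i<N. \<Sum>j<N. diagonal_pairing m \<tau> \<sigma> (int i - int j))"
proof -
  have "(\<Sum>r<N * m. \<Sum>c<N * m. block_toeplitz m \<tau> r c * block_toeplitz m \<sigma> r c) =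
      (\<Sum>i<N. \<Sum>p<m. \<Sum>j<N. \<Sum>q<m. \<tau> (int i - int j) p q * \<sigma> (int i - int j) p q)"
    unfolding sum_blocks by (simp add: block_toeplitz_entry)
  also have "\<dots> = (\<Sum>i<N. \<Sum>j<N. diagonal_pairing m \<tau> \<sigma> (int i - int j))"
    unfolding diagonal_pairing_def by (rule sum.cong[OF refl], rule sum.swap)
  finally show ?thesis .
qed

section \<open>Trigonometric polynomials and roots of unity\<close>

lemma finite_idx [simp]: "finite (idx n)"
  unfolding idx_def by simp

lemma idx_iff: "k \<in> idx n \<longleftrightarrow> \<bar>k\<bar> < int n"
  unfolding idx_def by auto

definition trig_coeff :: "nat \<Rightarrow> (int \<Rightarrow> cmat) \<Rightarrow> int \<Rightarrow> cmat" where
  "trig_coeff n a k = (if k \<in> idx n then a k else (\<lambda>_ _. 0))"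

lemma roots_of_unity_sum:
  assumes "0 < M"
  shows "(\<Sum>l<M. cis (2 * pi * real l / real M) powi k) = (if int M dvd k then of_nat M else 0)"
proof (cases "int M dvd k")
  case True
  then obtain d where d: "k = int M * d" by blast
  have "cis (2 * pi * real l / real M) powi k = 1" for l
  proof -
    have "of_int k * (2 * pi * real l / real M) = 2 * pi * of_int (d * int l)"
      using assms unfolding d by (simp add: field_simps)
    then show ?thesis by (simp add: cis_power_int cis_multiple_2pi)
  qed
  then show ?thesis using True by simp
next
  case False
  define \<zeta> where "\<zeta> = cis (2 * pi * of_int k / real M)"
  have "\<zeta> \<noteq> 1"
  proof
    assume "\<zeta> = 1"
    then obtain n :: int where "2 * pi * of_int k / real M = of_int n * 2 * pi"
      by (auto simp: \<zeta>_def complex_eq_iff cos_one_2pi_int)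
    with assms have "of_int k = real M * of_int n" by (simp add: field_simps)
    then have "k = int M * n" by (metis of_int_eq_iff of_int_mult of_int_of_nat_eq)
    then show False using False by simp
  qed
  have "\<zeta> ^ M = cis (2 * pi * of_int k)" unfolding \<zeta>_def Complex.DeMoivre using assms by simp
  then have "\<zeta> ^ M = 1" by simp
  have "(\<Sum>l<M. cis (2 * pi * real l / real M) powi k) = (\<Sum>l<M. \<zeta> ^ l)"
    by (intro sum.cong refl) (simp add: \<zeta>_def cis_power_int Complex.DeMoivre mult_ac)
  also have "\<dots> = 0"
    using \<open>\<zeta> \<noteq> 1\<close> \<open>\<zeta> ^ M = 1\<close> by (simp add: geometric_sum)
  finally show ?thesis using False by simp
qed

lemma trig_poly_average:
  assumes "0 < M" and "int n + \<bar>d\<bar> \<le> int M"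
  shows "(\<Sum>l<M. cis (2 * pi * real l / real M) powi d * trig_poly n a (cis (2 * pi * real l / real M)) p q)
      = of_nat M * trig_coeff n a (- d) p q"
proof -
  let ?\<zeta> = "\<lambda>l::nat. cis (2 * pi * real l / real M)"
  have "(\<Sum>l<M. ?\<zeta> l powi d * trig_poly n a (?\<zeta> l) p q) =
      (\<Sum>k\<in>idx n. a k p q * (\<Sum>l<M. ?\<zeta> l powi (k + d)))"
    unfolding trig_poly_def sum_distrib_left
    by (subst sum.swap) (simp add: power_int_add mult_ac)
  also have "\<dots> = (\<Sum>k\<in>idx n. a k p q * (if k = - d then of_nat M else 0))"
  proof (intro sum.cong refl)
    fix k assume k: "k \<in> idx n"
    have "int M dvd (k + d) \<longleftrightarrow> k = - d"
    proof
      assume "int M dvd (k + d)"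
      moreover have "\<bar>k + d\<bar> < int M" using k assms(2) unfolding idx_def by auto
      ultimately have "k + d = 0" using dvd_imp_le_int by force
      then show "k = - d" by simp
    qed simp
    then show "a k p q * (\<Sum>l<M. ?\<zeta> l powi (k + d)) = a k p q * (if k = - d then of_nat M else 0)"
      unfolding roots_of_unity_sum[OF assms(1)] by simp
  qed
  also have "\<dots> = of_nat M * trig_coeff n a (- d) p q"
    unfolding trig_coeff_def by (simp add: if_distrib[of "\<lambda>x. _ * x"] sum.delta mult.commute cong: if_cong)
  finally show ?thesis .
qed

lemma unit_power_mult_cnj_power:
  assumes "cmod z = 1"
  shows "z ^ i * cnj z ^ j = z powi (int i - int j)"
proof -
  have "z \<noteq> 0" using assms by auto
  moreover have "cnj z = inverse z"
    using assms complex_norm_square[of z] by (simp add: inverse_unique)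
  ultimately show ?thesis by (simp add: power_int_diff power_inverse divide_inverse)
qed

lemma quad_form_twisted_blocks:
  assumes "cmod z = 1"
  shows "quad_form m A (\<lambda>p. \<Sum>j<N. x (j * m + p) * cnj z ^ j) =
     (\<Sum>i<N. \<Sum>j<N. \<Sum>p<m. \<Sum>q<m. cnj (x (i * m + p)) * (z powi (int i - int j) * A p q) * x (j * m + q))"
proof -
  have "cnj (\<Sum>i<N. x (i * m + p) * cnj z ^ i) * A p q * (\<Sum>j<N. x (j * m + q) * cnj z ^ j) =
      (\<Sum>i<N. \<Sum>j<N. cnj (x (i * m + p)) * (z powi (int i - int j) * A p q) * x (j * m + q))" for p q
    unfolding cnj_sum sum_distrib_right sum_distrib_left unit_power_mult_cnj_power[OF assms, symmetric]
    by (subst sum.swap) (simp add: mult_ac)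
  then have "quad_form m A (\<lambda>p. \<Sum>j<N. x (j * m + p) * cnj z ^ j) =
      (\<Sum>p<m. \<Sum>q<m. \<Sum>i<N. \<Sum>j<N. cnj (x (i * m + p)) * (z powi (int i - int j) * A p q) * x (j * m + q))"
    unfolding quad_form_def by simp
  also have "\<dots> = (\<Sum>i<N. \<Sum>j<N. \<Sum>p<m. \<Sum>q<m. cnj (x (i * m + p)) * (z powi (int i - int j) * A p q) * x (j * m + q))"
    by (rule sum_nested_swap)
  finally show ?thesis .
qed

lemma complex_nonneg_if_nat_multiple_nonneg:
  "0 \<le> of_nat M * (w :: complex) \<Longrightarrow> 0 < M \<Longrightarrow> 0 \<le> w"
  by (auto simp: less_eq_complex_def zero_le_mult_iff)

lemma trig_coeff_block_toeplitz_psd: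
  assumes F: "\<forall>z. cmod z = 1 \<longrightarrow> psd m (trig_poly n a z)"
  shows "psd (N * m) (block_toeplitz m (\<lambda>k. trig_coeff n a (- k)))"
  unfolding psd_iff_quad_form_nonneg
proof
  fix x
  \<comment> \<open>Averaging over \<open>M\<close>-th roots of unity, \<open>M > N + n\<close>, isolates the coefficient of \<open>z\<^sup>0\<close>.\<close>
  define M where "M = N + n + 1"
  define \<zeta> where "\<zeta> = (\<lambda>l::nat. cis (2 * pi * real l / real M))"
  define u where "u = (\<lambda>l p. \<Sum>j<N. x (j * m + p) * cnj (\<zeta> l) ^ j)"
  have "0 < M" unfolding M_def by simp
  have avg: "(\<Sum>l<M. cnj (x (i * m + p)) * (\<zeta> l powi (int i - int j) * trig_poly n a (\<zeta> l) p q) * x (j * m + q))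
      = cnj (x (i * m + p)) * (of_nat M * block_toeplitz m (\<lambda>k. trig_coeff n a (- k)) (i * m + p) (j * m + q)) * x (j * m + q)"
    if "i < N" "j < N" "p < m" "q < m" for i j p q
  proof -
    have "int n + \<bar>int i - int j\<bar> \<le> int M" using that unfolding M_def by auto
    then show ?thesis
      unfolding block_toeplitz_entry[OF that(3,4)] \<zeta>_def
      by (simp add: trig_poly_average[OF \<open>0 < M\<close>] flip: sum_distrib_left sum_distrib_right)
  qed
  have "(\<Sum>l<M. quad_form m (trig_poly n a (\<zeta> l)) (u l)) =
      (\<Sum>l<M. \<Sum>i<N. \<Sum>j<N. \<Sum>p<m. \<Sum>q<m.
         cnj (x (i * m + p)) * (\<zeta> l powi (int i - int j) * trig_poly n a (\<zeta> l) p q) * x (j * m + q))"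
    unfolding u_def \<zeta>_def by (simp add: quad_form_twisted_blocks)
  also have "\<dots> = (\<Sum>i<N. \<Sum>j<N. \<Sum>p<m. \<Sum>q<m. \<Sum>l<M.
         cnj (x (i * m + p)) * (\<zeta> l powi (int i - int j) * trig_poly n a (\<zeta> l) p q) * x (j * m + q))"
    by (simp only: sum.swap[of _ "{..<M}"])
  also have "\<dots> = of_nat M * quad_form (N * m) (block_toeplitz m (\<lambda>k. trig_coeff n a (- k))) x"
    unfolding quad_form_blocks sum_distrib_left
    by (intro sum.cong refl) (simp only: avg lessThan_iff, simp add: mult_ac)
  finally have "of_nat M * quad_form (N * m) (block_toeplitz m (\<lambda>k. trig_coeff n a (- k))) x =
      (\<Sum>l<M. quad_form m (trig_poly n a (\<zeta> l)) (u l))" ..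
  moreover have "0 \<le> (\<Sum>l<M. quad_form m (trig_poly n a (\<zeta> l)) (u l))"
    using F unfolding \<zeta>_def psd_iff_quad_form_nonneg by (intro sum_nonneg) simp
  ultimately show "0 \<le> quad_form (N * m) (block_toeplitz m (\<lambda>k. trig_coeff n a (- k))) x"
    using complex_nonneg_if_nat_multiple_nonneg \<open>0 < M\<close> by metis
qed

section \<open>Positivity of the Schur sums\<close>

lemma toeplitz_sum_Suc:
  fixes \<phi> :: "int \<Rightarrow> complex"
  assumes supp: "\<forall>d. d \<notin> idx n \<longrightarrow> \<phi> d = 0" and "n \<le> N"
  shows "(\<Sum>i<Suc N. \<Sum>j<Suc N. \<phi> (int i - int j)) = (\<Sum>i<N. \<Sum>j<N. \<phi> (int i - int j)) + (\<Sum>d\<in>idx n. \<phi> d)"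
proof -
  have split: "(\<Sum>i<Suc N. \<Sum>j<Suc N. \<phi> (int i - int j)) = (\<Sum>i<N. \<Sum>j<N. \<phi> (int i - int j))
      + ((\<Sum>i<Suc N. \<phi> (int i - int N)) + (\<Sum>j<N. \<phi> (int N - int j)))"
    by (simp add: sum.distrib)
  have "(\<Sum>i<Suc N. \<phi> (int i - int N)) = (\<Sum>d\<in>{- int N..0}. \<phi> d)"
    by (rule sum.reindex_bij_witness[of _ "\<lambda>d. nat (d + int N)" "\<lambda>i. int i - int N"]) auto
  moreover have "(\<Sum>j<N. \<phi> (int N - int j)) = (\<Sum>d\<in>{1..int N}. \<phi> d)"
    by (rule sum.reindex_bij_witness[of _ "\<lambda>d. nat (int N - d)" "\<lambda>j. int N - int j"]) auto
  moreover have "{- int N..int N} = {- int N..0} \<union> {1..int N}" by auto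
  then have "(\<Sum>d\<in>{- int N..0}. \<phi> d) + (\<Sum>d\<in>{1..int N}. \<phi> d) = (\<Sum>d\<in>{- int N..int N}. \<phi> d)"
    by (simp add: sum.union_disjoint)
  moreover have "(\<Sum>d\<in>{- int N..int N}. \<phi> d) = (\<Sum>d\<in>idx n. \<phi> d)"
    using supp \<open>n \<le> N\<close> by (intro sum.mono_neutral_right) (auto simp: idx_def)
  ultimately show ?thesis unfolding split by simp
qed

lemma toeplitz_sum_linear:
  fixes \<phi> :: "int \<Rightarrow> complex"
  assumes supp: "\<forall>d. d \<notin> idx n \<longrightarrow> \<phi> d = 0"
  shows "(\<Sum>i<n + k. \<Sum>j<n + k. \<phi> (int i - int j)) =
    (\<Sum>i<n. \<Sum>j<n. \<phi> (int i - int j)) + of_nat k * (\<Sum>d\<in>idx n. \<phi> d)"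
proof (induction k)
  case (Suc k)
  have "(\<Sum>i<n + Suc k. \<Sum>j<n + Suc k. \<phi> (int i - int j)) =
      (\<Sum>i<n + k. \<Sum>j<n + k. \<phi> (int i - int j)) + (\<Sum>d\<in>idx n. \<phi> d)"
    unfolding add_Suc_right by (rule toeplitz_sum_Suc[OF supp]) simp
  then show ?case unfolding Suc.IH by (simp add: algebra_simps)
qed simp

lemma complex_nonneg_if_affine_nonneg:
  fixes w s :: complex
  assumes "\<forall>k::nat. 0 \<le> w + of_nat k * s"
  shows "0 \<le> s"
proof -
  have "Im w = 0" "Im (w + s) = 0"
    using assms[rule_format, of 0] assms[rule_format, of 1] by (simp_all add: less_eq_complex_def)
  then have "Im s = 0" by simp
  moreover have "0 \<le> Re s"
  proof (rule ccontr)
    assume "\<not> 0 \<le> Re s"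
    then obtain k :: nat where "Re w < real k * - Re s"
      using reals_Archimedean3[of "- Re s"] by auto
    moreover have "0 \<le> Re w + real k * Re s"
      using assms[rule_format, of k] by (simp add: less_eq_complex_def)
    ultimately show False by simp
  qed
  ultimately show ?thesis by (simp add: less_eq_complex_def)
qed

lemma diagonal_pairing_trig_coeff_cong:
  assumes "\<forall>k. \<bar>k\<bar> < int n \<longrightarrow> \<sigma> k = \<tau> k"
  shows "diagonal_pairing m \<sigma> (\<lambda>k. trig_coeff n a (- k)) = diagonal_pairing m \<tau> (\<lambda>k. trig_coeff n a (- k))"
  using assms unfolding diagonal_pairing_def trig_coeff_def idx_iff by auto

lemma toeplitz_trig_pairing_partial_nonneg:
  assumes T: "psd (n * m) (block_toeplitz m \<tau>)"
    and F: "\<forall>z. cmod z = 1 \<longrightarrow> psd m (trig_poly n a z)"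
    and "0 < n" "n \<le> N"
  shows "0 \<le> (\<Sum>i<N. \<Sum>j<N. diagonal_pairing m \<tau> (\<lambda>k. trig_coeff n a (- k)) (int i - int j))"
proof -
  obtain \<sigma> where agree: "\<forall>k. \<bar>k\<bar> < int n \<longrightarrow> \<sigma> k = \<tau> k"
    and psd: "psd (N * m) (block_toeplitz m \<sigma>)"
    using block_toeplitz_extension_to[OF T \<open>0 < n\<close> \<open>n \<le> N\<close>] by blast
  have "0 \<le> (\<Sum>r<N * m. \<Sum>c<N * m.
      block_toeplitz m \<sigma> r c * block_toeplitz m (\<lambda>k. trig_coeff n a (- k)) r c)"
    using psd_pairing_nonneg[OF psd trig_coeff_block_toeplitz_psd[OF F]] .
  then show ?thesis
    unfolding block_toeplitz_pairing diagonal_pairing_trig_coeff_cong[OF agree] .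
qed

lemma toeplitz_trig_pairing_nonneg:
  assumes T: "psd (n * m) (block_toeplitz m \<tau>)"
    and F: "\<forall>z. cmod z = 1 \<longrightarrow> psd m (trig_poly n a z)"
  shows "0 \<le> (\<Sum>k\<in>idx n. \<Sum>p<m. \<Sum>q<m. \<tau> (- k) p q * a k p q)"
proof (cases "n = 0")
  case True
  then show ?thesis by (simp add: idx_def)
next
  case False
  \<comment> \<open>The pairings of the extensions of size \<open>n + k\<close> grow linearly in \<open>k\<close> with slope the sum in question.\<close>
  define \<phi> where "\<phi> = diagonal_pairing m \<tau> (\<lambda>k. trig_coeff n a (- k))"
  have supp: "\<forall>d. d \<notin> idx n \<longrightarrow> \<phi> d = 0"
    unfolding \<phi>_def diagonal_pairing_def trig_coeff_def idx_iff by simp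
  have total: "(\<Sum>d\<in>idx n. \<phi> d) = (\<Sum>k\<in>idx n. \<Sum>p<m. \<Sum>q<m. \<tau> (- k) p q * a k p q)"
    unfolding \<phi>_def diagonal_pairing_def trig_coeff_def
    by (rule sum.reindex_bij_witness[of _ uminus uminus]) (auto simp: idx_iff)
  have "0 \<le> (\<Sum>i<n + k. \<Sum>j<n + k. \<phi> (int i - int j))" for k
    using toeplitz_trig_pairing_partial_nonneg[OF T F, of "n + k"] False unfolding \<phi>_def by simp
  then have "0 \<le> (\<Sum>i<n. \<Sum>j<n. \<phi> (int i - int j)) + of_nat k * (\<Sum>d\<in>idx n. \<phi> d)" for k
    unfolding toeplitz_sum_linear[OF supp] .
  then have "\<forall>k. 0 \<le> (\<Sum>i<n. \<Sum>j<n. \<phi> (int i - int j)) + of_nat k * (\<Sum>d\<in>idx n. \<phi> d)"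
    by simp
  then show ?thesis unfolding total[symmetric] by (rule complex_nonneg_if_affine_nonneg)
qed

lemma schur_sum_psd_if_toeplitz_psd:
  assumes T: "psd (n * m) (block_toeplitz m \<tau>)"
    and F: "\<forall>z. cmod z = 1 \<longrightarrow> psd m (trig_poly n a z)"
  shows "psd m (\<lambda>i j. \<Sum>k\<in>idx n. schur (\<tau> (- k)) (a k) i j)"
  unfolding psd_iff_quad_form_nonneg
proof
  fix v
  define av where "av = (\<lambda>k p q. cnj (v p) * a k p q * v q)"
  have "trig_poly n av z = (\<lambda>p q. cnj (v p) * trig_poly n a z p q * v q)" for z
    unfolding trig_poly_def av_def by (simp add: sum_distrib_left sum_distrib_right mult_ac)
  then have "\<forall>z. cmod z = 1 \<longrightarrow> psd m (trig_poly n av z)"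
    using F psd_congruence by simp
  moreover have "quad_form m (\<lambda>i j. \<Sum>k\<in>idx n. schur (\<tau> (- k)) (a k) i j) v =
      (\<Sum>k\<in>idx n. \<Sum>p<m. \<Sum>q<m. \<tau> (- k) p q * av k p q)"
    unfolding quad_form_def schur_def av_def
    by (simp add: sum_distrib_left sum_distrib_right mult_ac sum.swap[of _ "idx n"])
  ultimately show "0 \<le> quad_form m (\<lambda>i j. \<Sum>k\<in>idx n. schur (\<tau> (- k)) (a k) i j) v"
    using toeplitz_trig_pairing_nonneg[OF T] by simp
qed

section \<open>Block autocorrelations\<close>

lemma sum_idx_collapse:
  "(\<Sum>k\<in>idx n. \<Sum>i<n. \<Sum>j<n. if int j - int i = k then g i j k else 0) = (\<Sum>i<n. \<Sum>j<n. g i j (int j - int i))"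
proof -
  have "(\<Sum>k\<in>idx n. \<Sum>i<n. \<Sum>j<n. if int j - int i = k then g i j k else 0) =
      (\<Sum>i<n. \<Sum>j<n. \<Sum>k\<in>idx n. if int j - int i = k then g i j k else 0)"
    by (simp only: sum.swap[of _ "idx n"])
  also have "\<dots> = (\<Sum>i<n. \<Sum>j<n. g i j (int j - int i))"
    by (intro sum.cong refl) (auto simp: idx_iff)
  finally show ?thesis .
qed

definition block_autocorrelation :: "nat \<Rightarrow> nat \<Rightarrow> (nat \<Rightarrow> complex) \<Rightarrow> int \<Rightarrow> cmat" where
  "block_autocorrelation n m x = (\<lambda>k p q. \<Sum>i<n. \<Sum>j<n.
     if int j - int i = k then cnj (x (i * m + p)) * x (j * m + q) else 0)"

lemma trig_poly_block_autocorrelation: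
  assumes z: "cmod z = 1"
  shows "trig_poly n (block_autocorrelation n m x) z =
    (\<lambda>p q. cnj (\<Sum>i<n. x (i * m + p) * z ^ i) * (\<Sum>j<n. x (j * m + q) * z ^ j))"
proof (intro ext)
  fix p q
  have "trig_poly n (block_autocorrelation n m x) z p q = (\<Sum>k\<in>idx n. \<Sum>i<n. \<Sum>j<n.
      if int j - int i = k then cnj (x (i * m + p)) * x (j * m + q) * z powi k else 0)"
    unfolding trig_poly_def block_autocorrelation_def
    by (simp add: sum_distrib_right if_distrib[of "\<lambda>y. y * _"] cong: if_cong)
  also have "\<dots> = (\<Sum>i<n. \<Sum>j<n. cnj (x (i * m + p)) * x (j * m + q) * z powi (int j - int i))"
    by (rule sum_idx_collapse)
  also have "\<dots> = cnj (\<Sum>i<n. x (i * m + p) * z ^ i) * (\<Sum>j<n. x (j * m + q) * z ^ j)"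
    unfolding cnj_sum sum_distrib_right sum_distrib_left unit_power_mult_cnj_power[OF z, symmetric]
    by (subst sum.swap) (simp add: mult_ac)
  finally show "trig_poly n (block_autocorrelation n m x) z p q =
      cnj (\<Sum>i<n. x (i * m + p) * z ^ i) * (\<Sum>j<n. x (j * m + q) * z ^ j)" .
qed

lemma quad_form_schur_sum_block_autocorrelation:
  "quad_form m (\<lambda>i j. \<Sum>k\<in>idx n. schur (\<tau> (- k)) (block_autocorrelation n m x k) i j) (\<lambda>_. 1) =
     quad_form (n * m) (block_toeplitz m \<tau>) x"
proof -
  have "quad_form m (\<lambda>i j. \<Sum>k\<in>idx n. schur (\<tau> (- k)) (block_autocorrelation n m x k) i j) (\<lambda>_. 1) =
      (\<Sum>p<m. \<Sum>q<m. \<Sum>k\<in>idx n. \<Sum>i<n. \<Sum>j<n.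
        if int j - int i = k then \<tau> (- k) p q * (cnj (x (i * m + p)) * x (j * m + q)) else 0)"
    unfolding quad_form_def schur_def block_autocorrelation_def
    by (simp add: sum_distrib_left if_distrib[of "\<lambda>y. _ * y"] cong: if_cong)
  also have "\<dots> = (\<Sum>p<m. \<Sum>q<m. \<Sum>i<n. \<Sum>j<n. \<tau> (int i - int j) p q * (cnj (x (i * m + p)) * x (j * m + q)))"
    by (simp only: sum_idx_collapse minus_diff_eq)
  also have "\<dots> = (\<Sum>i<n. \<Sum>j<n. \<Sum>p<m. \<Sum>q<m. \<tau> (int i - int j) p q * (cnj (x (i * m + p)) * x (j * m + q)))"
    by (rule sum_nested_swap)
  also have "\<dots> = quad_form (n * m) (block_toeplitz m \<tau>) x"
    unfolding quad_form_blocks by (simp add: block_toeplitz_entry mult_ac)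
  finally show ?thesis .
qed

lemma toeplitz_psd_if_schur_sums_psd:
  assumes H: "\<forall>a :: int \<Rightarrow> nat \<Rightarrow> nat \<Rightarrow> complex.
       (\<forall>z. cmod z = 1 \<longrightarrow> psd m (trig_poly n a z)) \<longrightarrow>
       psd m (\<lambda>i j. \<Sum>k\<in>idx n. schur (\<tau> (- k)) (a k) i j)"
  shows "psd (n * m) (block_toeplitz m \<tau>)"
  unfolding psd_iff_quad_form_nonneg
proof
  fix x
  have "\<forall>z. cmod z = 1 \<longrightarrow> psd m (trig_poly n (block_autocorrelation n m x) z)"
  proof (intro allI impI)
    fix z :: complex
    assume "cmod z = 1"
    show "psd m (trig_poly n (block_autocorrelation n m x) z)"
      unfolding trig_poly_block_autocorrelation[OF \<open>cmod z = 1\<close>] by (rule psd_rank_one)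
  qed
  then have "psd m (\<lambda>i j. \<Sum>k\<in>idx n. schur (\<tau> (- k)) (block_autocorrelation n m x k) i j)"
    using H by blast
  then show "0 \<le> quad_form (n * m) (block_toeplitz m \<tau>) x"
    unfolding psd_iff_quad_form_nonneg quad_form_schur_sum_block_autocorrelation[symmetric] by blast
qed

theorem proposition6p1:
  fixes n m :: nat and \<tau> :: "int \<Rightarrow> nat \<Rightarrow> nat \<Rightarrow> complex"
  shows "psd (n * m) (block_toeplitz m \<tau>) \<longleftrightarrow>
    (\<forall>a :: int \<Rightarrow> nat \<Rightarrow> nat \<Rightarrow> complex.
       (\<forall>z. cmod z = 1 \<longrightarrow> psd m (trig_poly n a z)) \<longrightarrow>
       psd m (\<lambda>i j. \<Sum>k\<in>idx n. schur (\<tau> (- k)) (a k) i j))"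
proof
  assume "psd (n * m) (block_toeplitz m \<tau>)"
  then show "\<forall>a. (\<forall>z. cmod z = 1 \<longrightarrow> psd m (trig_poly n a z)) \<longrightarrow>
      psd m (\<lambda>i j. \<Sum>k\<in>idx n. schur (\<tau> (- k)) (a k) i j)"
    using schur_sum_psd_if_toeplitz_psd by blast
qed (rule toeplitz_psd_if_schur_sums_psd)

end
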